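(* Let $\mathfrak{R}$ be either $\mathbb{F}_q$ ($q$ a prime power) or $\mathbb{Z}_k$ ($k\ge2$), with character $\chi$ as in the context. Let $C$ and $D$ be $\mathfrak{R}$-linear codes of length $n$ and $\bm{w}\in\mathfrak{R}^n$. Then (i) $\displaystyle \mathfrak{Jac}^{av}(C,D^{\perp},\bm{w};x_a:a\in\mathfrak{R}^3)=\frac{1}{|D|}\mathfrak{Jac}^{av}\Big(C,D,\bm{w};\sum_{b\in\mathfrak{R}}\chi(a_2b)x_{(a_1,b,a_3)}:a\in\mathfrak{R}^3\Big)$; (ii) $\displaystyle \mathfrak{Jac}^{av}(C^{\perp},D,\bm{w};x_a:a\in\mathfrak{R}^3)=\frac{1}{|C|}\mathfrak{Jac}^{av}\Big(C,D,\bm{w};\sum_{b\in\mathfrak{R}}\chi(a_1b)x_{(b,a_2,a_3)}:a\in\mathfrak{R}^3\Big)$; (iii) $\displaystyle \mathfrak{Jac}^{av}(C^{\perp},D^{\perp},\bm{w};x_a:a\in\mathfrak{R}^3)=\frac{1}{|C||D|}\mathfrak{Jac}^{av}\Big(C,D,\bm{w};\sum_{b_1,b_2\in\mathfrak{R}}\chi(a_1b_1+a_2b_2)x_{(b_1,b_2,a_3)}:a\in\mathfrak{R}^3\Big)$, where on each right-hand side every variable $x_{(a_1,a_2,a_3)}$ of $\mathfrak{Jac}^{av}(C,D,\bm{w};x_a:a\in\mathfrak{R}^3)$ is replaced by the indicated linear form.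
   Context: An $\mathbb{F}_q$-linear code of length $n$ is a subspace of $\mathbb{F}_q^n$; a $\mathbb{Z}_k$-linear code is an additive subgroup of $\mathbb{Z}_k^n$. $C^\perp=\{\bm{v}\in\mathfrak{R}^n : \sum_iu_iv_i=0\ \forall\bm{u}\in C\}$. The character $\chi$: if $\mathfrak{R}=\mathbb{F}_q$, $q=p^f$, fix a root $\lambda$ of a primitive irreducible polynomial of degree $f$ over $\mathbb{F}_p$, write $\alpha=\alpha_0+\alpha_1\lambda+\cdots+\alpha_{f-1}\lambda^{f-1}$ ($\alpha_i\in\mathbb{F}_p$) and set $\chi(\alpha)=\zeta_p^{\alpha_0}$; if $\mathfrak{R}=\mathbb{Z}_k$, $\chi(\alpha)=\zeta_k^{\alpha}$ ($\zeta_m$ a primitive $m$-th root of unity). For $a\in\mathfrak{R}^3$, $h_a(\bm{u},\bm{v};\bm{w})=\#\{i:(u_i,v_i,w_i)=a\}$; $\mathfrak{Jac}(C,D,\bm{w};x_a:a\in\mathfrak{R}^3)=\sum_{\bm{u}\in C,\bm{v}\in D}\prod_{a\in\mathfrak{R}^3}x_a^{h_a(\bm{u},\bm{v};\bm{w})}$. For $\sigma\in S_n$, $\bm{u}^\sigma=(u_{\sigma(1)},\dots,u_{\sigma(n)})$, $C^\sigma=\{\bm{u}^\sigma:\bm{u}\in C\}$. The average complete joint Jacobi polynomial is $\mathfrak{Jac}^{av}(C,D,\bm{w};x_a:a\in\mathfrak{R}^3)=\frac{1}{n!}\sum_{\sigma\in S_n}\mathfrak{Jac}(C^\sigma,D,\bm{w};x_a:a\in\mathfrak{R}^3)$.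 *)

theory Defs
  imports Complex_Main "HOL-Computational_Algebra.Polynomial" "HOL-Combinatorics.Permutations"
begin

definition is_field_ring :: "'r::comm_ring_1 itself \<Rightarrow> bool" where
  "is_field_ring _ \<longleftrightarrow> (\<forall>x::'r. x \<noteq> 0 \<longrightarrow> (\<exists>y. x * y = 1))"

definition prim_root_unity :: "complex \<Rightarrow> nat \<Rightarrow> bool" where
  "prim_root_unity z m \<longleftrightarrow> z ^ m = 1 \<and> (\<forall>j. 0 < j \<and> j < m \<longrightarrow> z ^ j \<noteq> 1)"

text \<open>Polynomials over the prime field F_p, viewed inside 'r via the prime subfield (range of_nat).\<close>
definition over_prime_field :: "'r::comm_ring_1 poly \<Rightarrow> bool" where
  "over_prime_field P \<longleftrightarrow> (\<forall>i. coeff P i \<in> range (of_nat :: nat \<Rightarrow> 'r))"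

definition primitive_irreducible :: "nat \<Rightarrow> nat \<Rightarrow> 'r::comm_ring_1 poly \<Rightarrow> bool" where
  "primitive_irreducible p f P \<longleftrightarrow>
     over_prime_field P \<and> degree P = f \<and>
     (\<forall>g h. over_prime_field g \<and> over_prime_field h \<and> P = g * h \<longrightarrow> degree g = 0 \<or> degree h = 0) \<and>
     (\<forall>x. poly P x = 0 \<longrightarrow> x ^ (p ^ f - 1) = 1 \<and> (\<forall>m. 0 < m \<and> m < p ^ f - 1 \<longrightarrow> x ^ m \<noteq> 1))"

text \<open>The character on F_q: alpha = alpha_0 + alpha_1 lam + ... + alpha_(f-1) lam^(f-1), chi(alpha) = zeta^alpha_0.\<close>
definition chi_Fq :: "nat \<Rightarrow> nat \<Rightarrow> 'r::comm_ring_1 \<Rightarrow> complex \<Rightarrow> 'r \<Rightarrow> complex" where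
  "chi_Fq p f lam z \<alpha> = z ^ (THE c. c < p \<and> (\<exists>cs. (\<forall>i. cs i < p) \<and>
       \<alpha> = of_nat c + (\<Sum>i=1..<f. of_nat (cs i) * lam ^ i)))"

definition Fq_character :: "nat \<Rightarrow> nat \<Rightarrow> 'r::{comm_ring_1,finite} \<Rightarrow> complex \<Rightarrow> ('r \<Rightarrow> complex) \<Rightarrow> bool" where
  "Fq_character p f lam z chi \<longleftrightarrow>
     is_field_ring TYPE('r) \<and> prime p \<and> of_nat p = (0::'r) \<and> 0 < f \<and> card (UNIV :: 'r set) = p ^ f \<and>
     (\<exists>P. primitive_irreducible p f P \<and> poly P lam = 0) \<and>
     prim_root_unity z p \<and> chi = chi_Fq p f lam z"

text \<open>The ring Z_k: a finite ring of cardinality k generated additively by 1; chi(alpha) = zeta^alpha.\<close>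
definition chi_Zk :: "nat \<Rightarrow> complex \<Rightarrow> 'r::comm_ring_1 \<Rightarrow> complex" where
  "chi_Zk k z \<alpha> = z ^ (THE j. j < k \<and> of_nat j = \<alpha>)"

definition Zk_character :: "nat \<Rightarrow> complex \<Rightarrow> ('r::{comm_ring_1,finite} \<Rightarrow> complex) \<Rightarrow> bool" where
  "Zk_character k z chi \<longleftrightarrow>
     2 \<le> k \<and> card (UNIV :: 'r set) = k \<and> surj (of_nat :: nat \<Rightarrow> 'r) \<and> prim_root_unity z k \<and> chi = chi_Zk k z"

definition vecs :: "nat \<Rightarrow> (nat \<Rightarrow> 'r::zero) set" where
  "vecs n = {u. \<forall>i. n \<le> i \<longrightarrow> u i = 0}"

definition linear_code :: "nat \<Rightarrow> (nat \<Rightarrow> 'r::comm_ring_1) set \<Rightarrow> bool" where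
  "linear_code n C \<longleftrightarrow> C \<subseteq> vecs n \<and> (\<lambda>_. 0) \<in> C \<and>
     (\<forall>u\<in>C. \<forall>v\<in>C. (\<lambda>i. u i + v i) \<in> C) \<and>
     (\<forall>c. \<forall>u\<in>C. (\<lambda>i. c * u i) \<in> C)"

definition dual_code :: "nat \<Rightarrow> (nat \<Rightarrow> 'r::comm_ring_1) set \<Rightarrow> (nat \<Rightarrow> 'r) set" where
  "dual_code n C = {v \<in> vecs n. \<forall>u\<in>C. (\<Sum>i<n. u i * v i) = 0}"

definition perm_code :: "(nat \<Rightarrow> nat) \<Rightarrow> (nat \<Rightarrow> 'r) set \<Rightarrow> (nat \<Rightarrow> 'r) set" where
  "perm_code \<sigma> C = (\<lambda>u. \<lambda>i. u (\<sigma> i)) ` C"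

section \<open>Complete joint Jacobi polynomial, as a function of the variables x_a\<close>

definition hcount :: "nat \<Rightarrow> (nat \<Rightarrow> 'r) \<Rightarrow> (nat \<Rightarrow> 'r) \<Rightarrow> (nat \<Rightarrow> 'r) \<Rightarrow> 'r \<times> 'r \<times> 'r \<Rightarrow> nat" where
  "hcount n u v w a = card {i \<in> {0..<n}. (u i, v i, w i) = a}"

definition Jac :: "nat \<Rightarrow> (nat \<Rightarrow> 'r::finite) set \<Rightarrow> (nat \<Rightarrow> 'r) set \<Rightarrow> (nat \<Rightarrow> 'r)
                   \<Rightarrow> ('r \<times> 'r \<times> 'r \<Rightarrow> complex) \<Rightarrow> complex" where
  "Jac n C D w x = (\<Sum>u\<in>C. \<Sum>v\<in>D. \<Prod>a\<in>UNIV. x a ^ hcount n u v w a)"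

definition Jac_av :: "nat \<Rightarrow> (nat \<Rightarrow> 'r::finite) set \<Rightarrow> (nat \<Rightarrow> 'r) set \<Rightarrow> (nat \<Rightarrow> 'r)
                   \<Rightarrow> ('r \<times> 'r \<times> 'r \<Rightarrow> complex) \<Rightarrow> complex" where
  "Jac_av n C D w x = (1 / of_nat (fact n)) *
     (\<Sum>\<sigma>\<in>{\<sigma>. \<sigma> permutes {0..<n}}. Jac n (perm_code \<sigma> C) D w x)"

end

theory Submission
  imports Defs "HOL-Number_Theory.Cong"
begin

text \<open>
  Let chi be a generating character: additive, and nontrivial on every line t c with c \<noteq> 0.
  Then the character sum of the inner product u.v over a linear code E is |E| when v lies in the
  dual code and 0 otherwise, and this yields Poisson summation: for all functions g_i,
  the sum over the dual of E of prod_i g_i(v_i) equals |E|^-1 times the sum over u in E of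
  prod_i sum_b chi(u_i b) g_i(b). Writing Jac as a sum over C x D of products over the coordinates
  and applying this in the D- or the C-variable gives (i) and (ii), and (iii) is (i) followed by (ii).
  Permuting coordinates commutes with taking duals and preserves linearity and size, so the
  identities survive averaging over S_n.

  Both characters of the statement are generating.
  On F_q, chi a = z^c for the first coordinate c of a in the basis 1, lam, ..., lam^(f-1) over F_p;
  these coordinates exist because every nonzero element is a power of the primitive element lam,
  and P(lam) = 0 pushes all powers into the span of the first f; they are unique since that span
  is reached by only p^f coefficient vectors; and they are additive mod p.
\<close>

section \<open>Coordinatewise form of the Jacobi polynomial\<close>

lemma bij_betw_restrict_vecs:
  "bij_betw (\<lambda>v. restrict v {..<n}) (vecs n) (PiE {..<n} (\<lambda>_. UNIV))"
  by (rule bij_betw_byWitness[where f' = "\<lambda>e i. if i < n then e i else 0"])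
     (auto simp: vecs_def fun_eq_iff PiE_def extensional_def)

lemma finite_vecs: "finite (vecs n :: (nat \<Rightarrow> 'a::{zero,finite}) set)"
  by (metis bij_betw_finite bij_betw_restrict_vecs finite finite_PiE finite_lessThan)

lemma sum_vecs_prod:
  fixes g :: "nat \<Rightarrow> 'a::{zero,finite} \<Rightarrow> 'c::comm_semiring_1"
  shows "(\<Sum>v\<in>vecs n. \<Prod>i<n. g i (v i)) = (\<Prod>i<n. \<Sum>b\<in>UNIV. g i b)"
proof -
  have "(\<Sum>v\<in>vecs n. \<Prod>i<n. g i (v i)) = (\<Sum>v\<in>vecs n. \<Prod>i<n. g i (restrict v {..<n} i))"
    by simp
  also have "\<dots> = (\<Sum>e\<in>PiE {..<n} (\<lambda>_. UNIV). \<Prod>i<n. g i (e i))"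
    by (rule sum.reindex_bij_betw[OF bij_betw_restrict_vecs])
  also have "\<dots> = (\<Prod>i<n. \<Sum>b\<in>UNIV. g i b)"
    by (rule prod_sum_PiE[symmetric]) auto
  finally show ?thesis .
qed

lemma prod_power_hcount:
  fixes x :: "'a::finite \<times> 'a \<times> 'a \<Rightarrow> 'c::comm_monoid_mult"
  shows "(\<Prod>a\<in>UNIV. x a ^ hcount n u v w a) = (\<Prod>i<n. x (u i, v i, w i))"
proof -
  have "(\<Prod>i<n. x (u i, v i, w i)) =
      (\<Prod>a\<in>UNIV. \<Prod>i\<in>{i. i \<in> {0..<n} \<and> (u i, v i, w i) = a}. x (u i, v i, w i))"
    using prod.group[of "{..<n}" UNIV "\<lambda>i. (u i, v i, w i)" "\<lambda>i. x (u i, v i, w i)"]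
    by (simp add: lessThan_atLeast0)
  also have "\<dots> = (\<Prod>a\<in>UNIV. x a ^ hcount n u v w a)"
    unfolding hcount_def by (intro prod.cong refl) (simp add: prod_constant)
  finally show ?thesis ..
qed

lemma Jac_eq_sum_prod: "Jac n C D w x = (\<Sum>u\<in>C. \<Sum>v\<in>D. \<Prod>i<n. x (u i, v i, w i))"
  unfolding Jac_def prod_power_hcount ..

section \<open>Generating characters and Poisson summation\<close>

lemma linear_code_finite:
  "linear_code n (C :: (nat \<Rightarrow> 'a::{comm_ring_1,finite}) set) \<Longrightarrow> finite C"
  unfolding linear_code_def using finite_vecs finite_subset by blast

lemma linear_code_card_pos:
  "linear_code n (C :: (nat \<Rightarrow> 'a::{comm_ring_1,finite}) set) \<Longrightarrow> 0 < card C"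
  using linear_code_finite[of n C] unfolding linear_code_def by (auto simp: card_gt_0_iff)

lemma linear_code_add:
  "linear_code n C \<Longrightarrow> u \<in> C \<Longrightarrow> v \<in> C \<Longrightarrow> (\<lambda>i. u i + v i) \<in> C"
  unfolding linear_code_def by blast

lemma linear_code_smult: "linear_code n C \<Longrightarrow> u \<in> C \<Longrightarrow> (\<lambda>i. c * u i) \<in> C"
  unfolding linear_code_def by blast

lemma linear_code_diff:
  "linear_code n C \<Longrightarrow> u \<in> C \<Longrightarrow> v \<in> C \<Longrightarrow> (\<lambda>i. u i - v i) \<in> C"
  using linear_code_add[of n C u "\<lambda>i. - 1 * v i"] linear_code_smult[of n C v "- 1"] by simp

definition generating_character :: "('a::comm_ring_1 \<Rightarrow> complex) \<Rightarrow> bool" where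
  "generating_character chi \<longleftrightarrow> chi 0 = 1 \<and> (\<forall>a b. chi (a + b) = chi a * chi b) \<and>
     (\<forall>c. c \<noteq> 0 \<longrightarrow> (\<exists>t. chi (t * c) \<noteq> 1))"

lemma generating_character_add:
  "generating_character chi \<Longrightarrow> chi (a + b) = chi a * chi b"
  unfolding generating_character_def by blast

lemma generating_character_sum:
  assumes "generating_character chi"
  shows "chi (\<Sum>i\<in>I. f i) = (\<Prod>i\<in>I. chi (f i))"
  using assms by (induction I rule: infinite_finite_induct) (auto simp: generating_character_def)

lemma sum_character_code:
  fixes C :: "(nat \<Rightarrow> 'a::{comm_ring_1,finite}) set"
  assumes chi: "generating_character chi" and C: "linear_code n C" and v: "v \<in> vecs n"
  shows "(\<Sum>u\<in>C. chi (\<Sum>i<n. u i * v i)) = (if v \<in> dual_code n C then of_nat (card C) else 0)"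
proof (cases "v \<in> dual_code n C")
  case True
  then have "(\<Sum>i<n. u i * v i) = 0" if "u \<in> C" for u
    using that by (auto simp: dual_code_def lessThan_atLeast0)
  with True chi show ?thesis by (simp add: generating_character_def)
next
  case False
  then obtain u0 where u0: "u0 \<in> C" and s: "(\<Sum>i<n. u0 i * v i) \<noteq> 0"
    using v by (auto simp: dual_code_def lessThan_atLeast0)
  then obtain t where t: "chi (t * (\<Sum>i<n. u0 i * v i)) \<noteq> 1"
    using chi unfolding generating_character_def by blast
  define d where "d = (\<lambda>i. t * u0 i)"
  have d: "d \<in> C" unfolding d_def using C u0 by (rule linear_code_smult)
  \<comment> \<open>Translating by the codeword d permutes C and multiplies every summand by the
    constant chi (t * u0.v) \<noteq> 1.\<close>
  have shift: "bij_betw (\<lambda>u i. u i + d i) C C"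
    by (rule bij_betw_byWitness[where f' = "\<lambda>u i. u i - d i"])
       (auto intro!: linear_code_add[OF C] linear_code_diff[OF C] d)
  let ?S = "\<Sum>u\<in>C. chi (\<Sum>i<n. u i * v i)"
  have "?S = (\<Sum>u\<in>C. chi (\<Sum>i<n. (u i + d i) * v i))"
    by (rule sum.reindex_bij_betw[OF shift, symmetric])
  also have "\<dots> = (\<Sum>u\<in>C. chi (\<Sum>i<n. u i * v i) * chi (t * (\<Sum>i<n. u0 i * v i)))"
    by (simp add: d_def distrib_right sum.distrib sum_distrib_left mult.assoc
        generating_character_add[OF chi])
  also have "\<dots> = ?S * chi (t * (\<Sum>i<n. u0 i * v i))"
    by (simp add: sum_distrib_right)
  finally have "?S * (1 - chi (t * (\<Sum>i<n. u0 i * v i))) = 0"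
    by (simp add: algebra_simps)
  with t False show ?thesis by simp
qed

lemma poisson_summation_dual_code:
  fixes C :: "(nat \<Rightarrow> 'a::{comm_ring_1,finite}) set" and g :: "nat \<Rightarrow> 'a \<Rightarrow> complex"
  assumes chi: "generating_character chi" and C: "linear_code n C"
  shows "(\<Sum>v\<in>dual_code n C. \<Prod>i<n. g i (v i)) =
     (1 / of_nat (card C)) * (\<Sum>u\<in>C. \<Prod>i<n. \<Sum>b\<in>UNIV. chi (u i * b) * g i b)"
proof -
  have "(\<Sum>u\<in>C. \<Prod>i<n. \<Sum>b\<in>UNIV. chi (u i * b) * g i b)
      = (\<Sum>u\<in>C. \<Sum>v\<in>vecs n. chi (\<Sum>i<n. u i * v i) * (\<Prod>i<n. g i (v i)))"
    by (simp add: sum_vecs_prod[symmetric] generating_character_sum[OF chi] prod.distrib)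
  also have "\<dots> = (\<Sum>v\<in>vecs n. (\<Sum>u\<in>C. chi (\<Sum>i<n. u i * v i)) * (\<Prod>i<n. g i (v i)))"
    by (simp add: sum_distrib_right sum.swap[of _ C])
  also have "\<dots> = (\<Sum>v\<in>vecs n.
      if v \<in> dual_code n C then of_nat (card C) * (\<Prod>i<n. g i (v i)) else 0)"
    by (intro sum.cong refl) (simp add: sum_character_code[OF chi C])
  also have "\<dots> = of_nat (card C) * (\<Sum>v\<in>dual_code n C. \<Prod>i<n. g i (v i))"
    by (simp add: sum.If_cases[OF finite_vecs] sum_distrib_left Int_absorb1
        dual_code_def Collect_conj_eq)
  finally show ?thesis
    using linear_code_card_pos[OF C] by simp
qed

lemma Jac_dual_right:
  assumes chi: "generating_character chi" and D: "linear_code n D"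
  shows "Jac n C (dual_code n D) w x =
    (1 / of_nat (card D)) * Jac n C D w (\<lambda>(a1, a2, a3). \<Sum>b\<in>UNIV. chi (a2 * b) * x (a1, b, a3))"
proof -
  have "(\<Sum>v\<in>dual_code n D. \<Prod>i<n. x (u i, v i, w i)) =
      (1 / of_nat (card D)) * (\<Sum>v\<in>D. \<Prod>i<n. \<Sum>b\<in>UNIV. chi (v i * b) * x (u i, b, w i))" for u
    by (rule poisson_summation_dual_code[OF chi D])
  then show ?thesis
    unfolding Jac_eq_sum_prod by (simp add: sum_distrib_left)
qed

lemma Jac_dual_left:
  assumes chi: "generating_character chi" and C: "linear_code n C"
  shows "Jac n (dual_code n C) D w x =
    (1 / of_nat (card C)) * Jac n C D w (\<lambda>(a1, a2, a3). \<Sum>b\<in>UNIV. chi (a1 * b) * x (b, a2, a3))"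
proof -
  have "Jac n (dual_code n C) D w x = (\<Sum>v\<in>D. \<Sum>u\<in>dual_code n C. \<Prod>i<n. x (u i, v i, w i))"
    unfolding Jac_eq_sum_prod by (rule sum.swap)
  also have "\<dots> = (\<Sum>v\<in>D. (1 / of_nat (card C)) *
      (\<Sum>u\<in>C. \<Prod>i<n. \<Sum>b\<in>UNIV. chi (u i * b) * x (b, v i, w i)))"
    by (intro sum.cong refl poisson_summation_dual_code[OF chi C])
  also have "\<dots> = (1 / of_nat (card C)) *
      Jac n C D w (\<lambda>(a1, a2, a3). \<Sum>b\<in>UNIV. chi (a1 * b) * x (b, a2, a3))"
    unfolding Jac_eq_sum_prod by (simp add: sum_distrib_left sum.swap[of _ D])
  finally show ?thesis .
qed

section \<open>Permuting coordinates\<close>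

lemma perm_code_comp: "perm_code \<sigma> (perm_code \<tau> C) = perm_code (\<tau> \<circ> \<sigma>) C"
  unfolding perm_code_def by (auto simp: image_comp comp_def)

lemma perm_code_id: "perm_code id C = C"
  unfolding perm_code_def by simp

lemma perm_code_mono: "A \<subseteq> B \<Longrightarrow> perm_code \<sigma> A \<subseteq> perm_code \<sigma> B"
  unfolding perm_code_def by (rule image_mono)

lemma card_perm_code:
  assumes "\<sigma> permutes {0..<n}"
  shows "card (perm_code \<sigma> C) = card C"
proof -
  have "inj_on (\<lambda>u i. u (\<sigma> i)) C"
  proof (rule inj_onI)
    fix u v :: "nat \<Rightarrow> 'a"
    assume "(\<lambda>i. u (\<sigma> i)) = (\<lambda>i. v (\<sigma> i))"
    then have "u (\<sigma> (inv \<sigma> i)) = v (\<sigma> (inv \<sigma> i))" for i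
      by (simp add: fun_eq_iff)
    then show "u = v"
      using permutes_inverses(1)[OF assms] by (simp add: fun_eq_iff)
  qed
  then show ?thesis unfolding perm_code_def by (rule card_image)
qed

lemma perm_vecs:
  assumes "\<sigma> permutes {0..<n}" and "u \<in> vecs n"
  shows "(\<lambda>i. u (\<sigma> i)) \<in> vecs n"
  using assms permutes_not_in[OF assms(1)] by (auto simp: vecs_def)

lemma linear_code_perm_code:
  assumes \<sigma>: "\<sigma> permutes {0..<n}" and C: "linear_code n C"
  shows "linear_code n (perm_code \<sigma> C)"
  using C perm_vecs[OF \<sigma>] unfolding linear_code_def perm_code_def
  by (auto intro!: image_eqI[where x = "\<lambda>_. 0"] image_eqI[where x = "\<lambda>i. _ i + _ i"]
      image_eqI[where x = "\<lambda>i. _ * _ i"])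

lemma perm_code_dual_code_subset:
  assumes \<sigma>: "\<sigma> permutes {0..<n}"
  shows "perm_code \<sigma> (dual_code n C) \<subseteq> dual_code n (perm_code \<sigma> C)"
proof -
  have "(\<Sum>i<n. u (\<sigma> i) * v (\<sigma> i)) = (\<Sum>i<n. u i * v i)" for u v :: "nat \<Rightarrow> 'a"
    using sum.permute[of \<sigma> "{..<n}" "\<lambda>i. u i * v i"] \<sigma> by (simp add: lessThan_atLeast0 comp_def)
  then show ?thesis
    using perm_vecs[OF \<sigma>] unfolding dual_code_def perm_code_def by auto
qed

lemma perm_code_dual_code:
  assumes \<sigma>: "\<sigma> permutes {0..<n}"
  shows "perm_code \<sigma> (dual_code n C) = dual_code n (perm_code \<sigma> C)"
proof
  show "perm_code \<sigma> (dual_code n C) \<subseteq> dual_code n (perm_code \<sigma> C)"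
    using \<sigma> by (rule perm_code_dual_code_subset)
next
  have \<sigma>': "inv \<sigma> permutes {0..<n}"
    using \<sigma> by (rule permutes_inv)
  have "dual_code n (perm_code \<sigma> C) =
      perm_code \<sigma> (perm_code (inv \<sigma>) (dual_code n (perm_code \<sigma> C)))"
    by (simp only: perm_code_comp permutes_inv_o(2)[OF \<sigma>] perm_code_id)
  also have "\<dots> \<subseteq> perm_code \<sigma> (dual_code n (perm_code (inv \<sigma>) (perm_code \<sigma> C)))"
    by (intro perm_code_mono perm_code_dual_code_subset \<sigma>')
  also have "\<dots> = perm_code \<sigma> (dual_code n C)"
    by (simp only: perm_code_comp permutes_inv_o(1)[OF \<sigma>] perm_code_id)
  finally show "dual_code n (perm_code \<sigma> C) \<subseteq> perm_code \<sigma> (dual_code n C)" .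
qed

lemma Jac_av_dual_right:
  assumes chi: "generating_character chi" and D: "linear_code n D"
  shows "Jac_av n C (dual_code n D) w x =
    (1 / of_nat (card D)) * Jac_av n C D w (\<lambda>(a1, a2, a3). \<Sum>b\<in>UNIV. chi (a2 * b) * x (a1, b, a3))"
  unfolding Jac_av_def Jac_dual_right[OF chi D] by (simp add: sum_distrib_left mult_ac)

lemma Jac_av_dual_left:
  assumes chi: "generating_character chi" and C: "linear_code n C"
  shows "Jac_av n (dual_code n C) D w x =
    (1 / of_nat (card C)) * Jac_av n C D w (\<lambda>(a1, a2, a3). \<Sum>b\<in>UNIV. chi (a1 * b) * x (b, a2, a3))"
proof -
  have "Jac n (perm_code \<sigma> (dual_code n C)) D w x =
      (1 / of_nat (card C)) *
      Jac n (perm_code \<sigma> C) D w (\<lambda>(a1, a2, a3). \<Sum>b\<in>UNIV. chi (a1 * b) * x (b, a2, a3))"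
    if \<sigma>: "\<sigma> permutes {0..<n}" for \<sigma>
    unfolding perm_code_dual_code[OF \<sigma>] Jac_dual_left[OF chi linear_code_perm_code[OF \<sigma> C]]
      card_perm_code[OF \<sigma>] ..
  then show ?thesis
    unfolding Jac_av_def by (simp add: sum_distrib_left mult_ac)
qed

section \<open>The characters of Z_k and F_q\<close>

lemma power_mod_eq_if_power_eq_1:
  fixes z :: "'a::monoid_mult"
  assumes "z ^ m = 1"
  shows "z ^ (x mod m) = z ^ x"
proof -
  have "z ^ x = z ^ (m * (x div m) + x mod m)"
    by simp
  also have "\<dots> = (z ^ m) ^ (x div m) * z ^ (x mod m)"
    by (simp only: power_add power_mult)
  finally show ?thesis
    using assms by simp
qed

lemma generating_character_root_power:
  fixes \<kappa> :: "'a::comm_ring_1 \<Rightarrow> nat"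
  assumes z: "prim_root_unity z m" and m: "0 < m"
    and add: "\<And>a b. \<kappa> (a + b) = (\<kappa> a + \<kappa> b) mod m"
    and nondeg: "\<And>c. c \<noteq> 0 \<Longrightarrow> \<exists>t. \<kappa> (t * c) mod m \<noteq> 0"
  shows "generating_character (\<lambda>a. z ^ \<kappa> a)"
proof -
  have zm: "z ^ m = 1" and prim: "\<And>j. 0 < j \<Longrightarrow> j < m \<Longrightarrow> z ^ j \<noteq> 1"
    using z by (auto simp: prim_root_unity_def)
  have hom: "z ^ \<kappa> (a + b) = z ^ \<kappa> a * z ^ \<kappa> b" for a b
    by (simp add: add power_mod_eq_if_power_eq_1[OF zm] power_add)
  have "z \<noteq> 0"
    using zm m by (auto simp: power_0_left)
  then have "z ^ \<kappa> 0 = 1"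
    using hom[of 0 0] by simp
  moreover have "\<exists>t. z ^ \<kappa> (t * c) \<noteq> 1" if c: "c \<noteq> 0" for c
  proof -
    obtain t where t: "\<kappa> (t * c) mod m \<noteq> 0"
      using nondeg[OF c] by blast
    then have "z ^ (\<kappa> (t * c) mod m) \<noteq> 1"
      using prim m by simp
    then show ?thesis
      unfolding power_mod_eq_if_power_eq_1[OF zm] ..
  qed
  ultimately show ?thesis
    unfolding generating_character_def using hom by blast
qed

lemma of_nat_mod_CHAR: "(of_nat (x mod CHAR('a)) :: 'a::semiring_1_cancel) = of_nat x"
  by (simp add: of_nat_eq_iff_cong_CHAR cong_def)

lemma CHAR_eq_card_if_surj_of_nat:
  assumes "surj (of_nat :: nat \<Rightarrow> 'a::{comm_ring_1,finite})"
  shows "CHAR('a) = card (UNIV :: 'a set)"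
proof -
  have pos: "0 < CHAR('a)"
    by (rule finite_imp_CHAR_pos) simp
  have "of_nat x \<in> (of_nat :: nat \<Rightarrow> 'a) ` {..<CHAR('a)}" for x
    using pos by (intro image_eqI[where x = "x mod CHAR('a)"]) (simp_all add: of_nat_mod_CHAR)
  then have image: "(of_nat :: nat \<Rightarrow> 'a) ` {..<CHAR('a)} = UNIV"
    using assms by (metis UNIV_eq_I surj_def)
  have "inj_on (of_nat :: nat \<Rightarrow> 'a) {..<CHAR('a)}"
    by (auto intro!: inj_onI simp: of_nat_eq_iff_cong_CHAR cong_def)
  then have "card ((of_nat :: nat \<Rightarrow> 'a) ` {..<CHAR('a)}) = CHAR('a)"
    by (simp add: card_image)
  then show ?thesis
    unfolding image ..
qed

lemma Zk_character_generating:
  fixes chi :: "'a::{comm_ring_1,finite} \<Rightarrow> complex"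
  assumes "Zk_character k z chi"
  shows "generating_character chi"
proof -
  have k: "2 \<le> k" and surj: "surj (of_nat :: nat \<Rightarrow> 'a)" and z: "prim_root_unity z k"
    and chi: "chi = chi_Zk k z" and CHAR: "CHAR('a) = k"
    using assms CHAR_eq_card_if_surj_of_nat[where 'a = 'a] by (auto simp: Zk_character_def)
  have residue: "(THE j. j < k \<and> of_nat j = (of_nat x :: 'a)) = x mod k" for x
  proof (rule the_equality)
    show "x mod k < k \<and> of_nat (x mod k) = (of_nat x :: 'a)"
      using k of_nat_mod_CHAR[of x, where 'a = 'a] CHAR by simp
  next
    fix j assume "j < k \<and> of_nat j = (of_nat x :: 'a)"
    then show "j = x mod k"
      using CHAR by (auto simp: of_nat_eq_iff_cong_CHAR cong_def)
  qed
  have of_nat_cases: "\<exists>x. a = of_nat x" for a :: 'a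
    using surj by (metis surj_def)
  show ?thesis
    unfolding chi chi_Zk_def
  proof (rule generating_character_root_power[OF z])
    fix a b :: 'a
    obtain x y where "a = of_nat x" "b = of_nat y"
      using of_nat_cases by metis
    then show "(THE j. j < k \<and> of_nat j = a + b) =
        ((THE j. j < k \<and> of_nat j = a) + (THE j. j < k \<and> of_nat j = b)) mod k"
      by (simp only: of_nat_add[symmetric] residue mod_add_eq)
  next
    fix c :: 'a assume "c \<noteq> 0"
    moreover obtain x where "c = of_nat x"
      using of_nat_cases by metis
    ultimately have "(THE j. j < k \<and> of_nat j = 1 * c) mod k \<noteq> 0"
      using residue[of x] of_nat_mod_CHAR[of x, where 'a = 'a] CHAR by (metis mod_mod_trivial mult_1 of_nat_0)
    then show "\<exists>t. (THE j. j < k \<and> of_nat j = t * c) mod k \<noteq> 0" ..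
  qed (use k in simp)
qed

lemma CHAR_eq_prime:
  assumes "prime p" and "of_nat p = (0::'a::semiring_1)" and "(1::'a) \<noteq> 0"
  shows "CHAR('a) = p"
proof -
  have "CHAR('a) dvd p"
    using assms(2) by (simp add: of_nat_eq_0_iff_char_dvd)
  moreover have "CHAR('a) \<noteq> 1"
    using assms(3) of_nat_CHAR[where 'a = 'a] by auto
  moreover have "\<forall>m. m dvd p \<longrightarrow> m = 1 \<or> m = p"
    using assms(1) by (simp add: prime_nat_iff)
  ultimately show ?thesis
    by blast
qed

lemma of_nat_invertible_if_CHAR_prime:
  assumes "prime CHAR('a::comm_ring_1)" and "of_nat g \<noteq> (0::'a)"
  shows "\<exists>h. of_nat g * of_nat h = (1::'a)"
proof -
  have "coprime g CHAR('a)"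
    using assms prime_imp_coprime[of "CHAR('a)" g]
    by (simp add: of_nat_eq_0_iff_char_dvd coprime_commute)
  then obtain h where "[g * h = Suc 0] (mod CHAR('a))"
    using cong_solve_coprime_nat by blast
  then have "of_nat (g * h) = (of_nat (Suc 0) :: 'a)"
    by (simp only: of_nat_eq_iff_cong_CHAR)
  then show ?thesis
    by auto
qed

lemma is_field_ring_no_zero_divisors:
  fixes x y :: "'a::comm_ring_1"
  assumes "is_field_ring TYPE('a)" and "x * y = 0"
  shows "x = 0 \<or> y = 0"
proof (cases "x = 0")
  case False
  then obtain x' where "x * x' = 1"
    using assms(1) unfolding is_field_ring_def by blast
  then have "y = x' * (x * y)"
    by (simp add: mult.assoc[symmetric] mult.commute[of x'])
  with assms(2) show ?thesis
    by simp
qed simp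

lemma is_field_ring_power_neq_0:
  fixes lam :: "'a::comm_ring_1"
  assumes field: "is_field_ring TYPE('a)" and "(1::'a) \<noteq> 0" and "lam \<noteq> 0"
  shows "lam ^ i \<noteq> 0"
proof (induction i)
  case (Suc i)
  then show ?case
    using assms is_field_ring_no_zero_divisors[OF field, of lam "lam ^ i"] by auto
qed (use assms in simp)

lemma is_field_ring_inj_on_power:
  fixes lam :: "'a::comm_ring_1"
  assumes field: "is_field_ring TYPE('a)" and "(1::'a) \<noteq> 0" and "lam \<noteq> 0"
    and order: "\<And>m. 0 < m \<Longrightarrow> m < N \<Longrightarrow> lam ^ m \<noteq> 1"
  shows "inj_on ((^) lam) {..<N}"
proof -
  have "lam ^ i \<noteq> lam ^ j" if "i < j" "j < N" for i j
  proof
    assume eq: "lam ^ i = lam ^ j"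
    have "lam ^ j = lam ^ i * lam ^ (j - i)"
      using \<open>i < j\<close> by (simp flip: power_add)
    then have "lam ^ i * (lam ^ (j - i) - 1) = 0"
      using eq by (simp add: right_diff_distrib)
    then have "lam ^ (j - i) = 1"
      using is_field_ring_power_neq_0[OF assms(1-3), of i] is_field_ring_no_zero_divisors[OF field]
      by fastforce
    with order[of "j - i"] that show False
      by linarith
  qed
  then show ?thesis
    unfolding inj_on_def by (metis lessThan_iff linorder_neqE_nat)
qed

lemma UNIV_eq_insert_zero_powers:
  fixes lam :: "'a::{comm_ring_1,finite}"
  assumes field: "is_field_ring TYPE('a)" and one: "(1::'a) \<noteq> 0"
    and N: "N = card (UNIV :: 'a set) - 1"
    and order: "lam ^ N = 1" "\<And>m. 0 < m \<Longrightarrow> m < N \<Longrightarrow> lam ^ m \<noteq> 1"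
  shows "UNIV = insert 0 ((^) lam ` {..<N})"
proof -
  have "card {0, 1::'a} \<le> card (UNIV :: 'a set)"
    by (rule card_mono) simp_all
  then have "0 < N"
    using one N by simp
  then have "lam \<noteq> 0"
    using order(1) one by (auto simp: power_0_left)
  then have "card ((^) lam ` {..<N}) = N" and "0 \<notin> (^) lam ` {..<N}"
    using is_field_ring_inj_on_power[OF field one _ order(2)]
      is_field_ring_power_neq_0[OF field one] by (auto simp: card_image)
  then have "card (insert 0 ((^) lam ` {..<N})) = card (UNIV :: 'a set)"
    using N \<open>0 < N\<close> by simp
  then show ?thesis
    by (intro card_subset_eq[symmetric]) simp_all
qed

lemma one_neq_zero_if_card_gt_1:
  assumes "1 < card (UNIV :: 'a::ring_1 set)"
  shows "(1::'a) \<noteq> 0"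
proof
  assume "(1::'a) = 0"
  then have "x = 0" for x :: 'a
    by (metis mult_1_right mult_zero_right)
  then have "(UNIV :: 'a set) = {0}"
    by blast
  then have "card (UNIV :: 'a set) = card {0::'a}"
    by (rule arg_cong)
  with assms show False
    by simp
qed

definition lincomb_powers :: "nat \<Rightarrow> 'a::semiring_1 \<Rightarrow> (nat \<Rightarrow> nat) \<Rightarrow> 'a"
  where
  "lincomb_powers f lam e = (\<Sum>i<f. of_nat (e i) * lam ^ i)"

lemma lincomb_powers_add:
  "lincomb_powers f lam e + lincomb_powers f lam e' = lincomb_powers f lam (\<lambda>i. e i + e' i)"
  by (simp add: lincomb_powers_def sum.distrib distrib_right)

lemma lincomb_powers_of_nat_mult:
  "of_nat k * lincomb_powers f lam e = lincomb_powers f lam (\<lambda>i. k * e i)"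
  by (simp add: lincomb_powers_def sum_distrib_left mult.assoc)

lemma lincomb_powers_uminus:
  assumes "CHAR('a::comm_ring_1) \<noteq> 0"
  shows "- lincomb_powers f (lam :: 'a) e = lincomb_powers f lam (\<lambda>i. (CHAR('a) - 1) * e i)"
proof -
  have "Suc (CHAR('a) - 1) = CHAR('a)"
    using assms by simp
  then have "(0::'a) = of_nat (Suc (CHAR('a) - 1))"
    by (simp only: of_nat_CHAR)
  then have "of_nat (CHAR('a) - 1) = (-1::'a)"
    by (simp add: eq_neg_iff_add_eq_0 add.commute)
  then show ?thesis
    by (simp flip: lincomb_powers_of_nat_mult)
qed

lemma lincomb_powers_mod_CHAR:
  "lincomb_powers f lam e = lincomb_powers f (lam :: 'a::comm_ring_1) (\<lambda>i. e i mod CHAR('a))"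
  by (simp add: lincomb_powers_def of_nat_mod_CHAR)

lemma lincomb_powers_cong:
  "(\<And>i. i < f \<Longrightarrow> e i = e' i) \<Longrightarrow> lincomb_powers f lam e = lincomb_powers f lam e'"
  by (simp add: lincomb_powers_def)

lemma lincomb_powers_unit:
  assumes "j < f"
  shows "lincomb_powers f lam (\<lambda>i. if i = j then 1 else 0) = lam ^ j"
proof -
  have "lincomb_powers f lam (\<lambda>i. if i = j then 1 else 0) = (\<Sum>i<f. if i = j then lam ^ i else 0)"
    unfolding lincomb_powers_def by (intro sum.cong) auto
  with assms show ?thesis
    by simp
qed

lemma lincomb_powers_split_first:
  "0 < f \<Longrightarrow> lincomb_powers f lam e = of_nat (e 0) + (\<Sum>i=1..<f. of_nat (e i) * lam ^ i)"
  by (simp add: lincomb_powers_def lessThan_atLeast0 sum.atLeast_Suc_lessThan)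

lemma sum_in_range_lincomb_powers:
  fixes lam :: "'a::semiring_1"
  assumes "\<And>i. i \<in> A \<Longrightarrow> u i \<in> range (lincomb_powers f lam)"
  shows "sum u A \<in> range (lincomb_powers f lam)"
  using assms
proof (induction A rule: infinite_finite_induct)
  case (insert i A)
  then have "u i \<in> range (lincomb_powers f lam)" "sum u A \<in> range (lincomb_powers f lam)"
    by simp_all
  then obtain e e' where "u i = lincomb_powers f lam e" "sum u A = lincomb_powers f lam e'"
    by blast
  then show ?case
    using insert.hyps by (simp add: lincomb_powers_add)
qed (auto simp: lincomb_powers_def intro!: range_eqI[where x = "\<lambda>_. 0"])

lemma of_nat_mult_in_range_lincomb_powers:
  "x \<in> range (lincomb_powers f lam) \<Longrightarrow> of_nat k * x \<in> range (lincomb_powers f lam)"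
  by (auto simp: lincomb_powers_of_nat_mult)

lemma power_degree_in_range_lincomb_powers:
  fixes lam :: "'a::comm_ring_1"
  assumes CHAR: "prime CHAR('a)"
    and P: "over_prime_field P" "degree P = f" "0 < f" "poly P lam = 0"
  shows "lam ^ f \<in> range (lincomb_powers f lam)"
proof -
  have "\<forall>i. \<exists>c. coeff P i = of_nat c"
    using P(1) unfolding over_prime_field_def by (auto simp: image_iff)
  then obtain g where g: "\<And>i. coeff P i = of_nat (g i)"
    by metis
  have "P \<noteq> 0"
    using P(2,3) by auto
  then have "coeff P f \<noteq> 0"
    using P(2) leading_coeff_0_iff by blast
  then obtain h where h: "of_nat (g f) * of_nat h = (1::'a)"
    using of_nat_invertible_if_CHAR_prime[OF CHAR] g by metis
  have "0 = (\<Sum>i<Suc f. coeff P i * lam ^ i)"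
    using P(2,4) by (simp add: poly_altdef lessThan_Suc_atMost)
  also have "\<dots> = lincomb_powers f lam g + of_nat (g f) * lam ^ f"
    by (simp add: lincomb_powers_def g)
  finally have lead: "of_nat (g f) * lam ^ f = - lincomb_powers f lam g"
    by (simp add: eq_neg_iff_add_eq_0 add.commute)
  have "lam ^ f = (of_nat (g f) * of_nat h) * lam ^ f"
    by (simp only: h mult_1_left)
  also have "\<dots> = of_nat h * (of_nat (g f) * lam ^ f)"
    by (simp only: mult_ac)
  finally have "lam ^ f = of_nat h * - lincomb_powers f lam g"
    unfolding lead .
  then show ?thesis
    using CHAR by (simp add: lincomb_powers_uminus lincomb_powers_of_nat_mult prime_gt_0_nat)
qed

lemma mult_in_range_lincomb_powers:
  fixes lam :: "'a::comm_semiring_1"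
  assumes top: "lam ^ f \<in> range (lincomb_powers f lam)"
    and x: "x \<in> range (lincomb_powers f lam)"
  shows "lam * x \<in> range (lincomb_powers f lam)"
proof -
  obtain e where "x = (\<Sum>i<f. of_nat (e i) * lam ^ i)"
    using x unfolding lincomb_powers_def by blast
  then have "lam * x = (\<Sum>i<f. of_nat (e i) * lam ^ Suc i)"
    by (simp add: sum_distrib_left mult.left_commute)
  moreover have "lam ^ Suc i \<in> range (lincomb_powers f lam)" if "i < f" for i
    using that top lincomb_powers_unit[of "Suc i" f lam, symmetric]
    by (cases "Suc i = f") (auto simp del: power_Suc)
  ultimately show ?thesis
    by (auto intro!: sum_in_range_lincomb_powers of_nat_mult_in_range_lincomb_powers
        simp del: power_Suc)
qed

lemma power_in_range_lincomb_powers: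
  fixes lam :: "'a::comm_ring_1"
  assumes "prime CHAR('a)"
    and P: "over_prime_field P" "degree P = f" "0 < f" "poly P lam = 0"
  shows "lam ^ j \<in> range (lincomb_powers f lam)"
proof (induction j)
  case 0
  show ?case
    using lincomb_powers_unit[OF P(3), of lam] by (metis power_0 rangeI)
next
  case (Suc j)
  then show ?case
    using mult_in_range_lincomb_powers[OF power_degree_in_range_lincomb_powers[OF assms]] by simp
qed

lemma range_lincomb_powers_eq_UNIV:
  fixes lam :: "'a::{comm_ring_1,finite}"
  assumes field: "is_field_ring TYPE('a)" and one: "(1::'a) \<noteq> 0" and CHAR: "prime CHAR('a)"
    and P: "over_prime_field P" "degree P = f" "0 < f" "poly P lam = 0"
    and order: "lam ^ (card (UNIV :: 'a set) - 1) = 1"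
      "\<And>m. 0 < m \<Longrightarrow> m < card (UNIV :: 'a set) - 1 \<Longrightarrow> lam ^ m \<noteq> 1"
  shows "range (lincomb_powers f lam) = UNIV"
proof -
  have "x \<in> range (lincomb_powers f lam)" for x
  proof -
    have "x \<in> insert 0 ((^) lam ` {..<card (UNIV :: 'a set) - 1})"
      using UNIV_eq_insert_zero_powers[OF field one refl order] by blast
    moreover have "lam ^ j \<in> range (lincomb_powers f lam)" for j
      using CHAR P by (rule power_in_range_lincomb_powers)
    moreover have "0 \<in> range (lincomb_powers f lam)"
      by (rule range_eqI[where x = "\<lambda>_. 0"]) (simp add: lincomb_powers_def)
    ultimately show ?thesis
      by blast
  qed
  then show ?thesis
    by blast
qed

lemma bij_betw_lincomb_powers:
  fixes lam :: "'a::{comm_ring_1,finite}"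
  assumes CHAR: "CHAR('a) = p" and card: "card (UNIV :: 'a set) = p ^ f"
    and span: "range (lincomb_powers f lam) = UNIV"
  shows "bij_betw (lincomb_powers f lam) (PiE {..<f} (\<lambda>_. {..<p})) UNIV"
proof -
  have "0 < p"
    using CHAR finite_imp_CHAR_pos[where 'a = 'a] by simp
  have reduce: "lincomb_powers f lam e \<in> lincomb_powers f lam ` PiE {..<f} (\<lambda>_. {..<p})" for e
  proof
    show "lincomb_powers f lam e = lincomb_powers f lam (restrict (\<lambda>i. e i mod p) {..<f})"
      using CHAR by (subst lincomb_powers_mod_CHAR) (rule lincomb_powers_cong, simp)
    show "restrict (\<lambda>i. e i mod p) {..<f} \<in> PiE {..<f} (\<lambda>_. {..<p})"
      using \<open>0 < p\<close> by simp
  qed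
  have "x \<in> lincomb_powers f lam ` PiE {..<f} (\<lambda>_. {..<p})" for x
  proof -
    have "x \<in> range (lincomb_powers f lam)"
      using span by simp
    then show ?thesis
      using reduce by blast
  qed
  then have image: "lincomb_powers f lam ` PiE {..<f} (\<lambda>_. {..<p}) = UNIV"
    by blast
  moreover have "inj_on (lincomb_powers f lam) (PiE {..<f} (\<lambda>_. {..<p}))"
    by (rule eq_card_imp_inj_on) (simp_all add: image card card_PiE finite_PiE)
  ultimately show ?thesis
    by (simp add: bij_betw_def)
qed

definition power_coords :: "nat \<Rightarrow> nat \<Rightarrow> 'a::semiring_1 \<Rightarrow> 'a \<Rightarrow> nat \<Rightarrow> nat"
  where
  "power_coords p f lam = inv_into (PiE {..<f} (\<lambda>_. {..<p})) (lincomb_powers f lam)"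

context
  fixes p f :: nat and lam :: "'a::comm_ring_1"
  assumes bij: "bij_betw (lincomb_powers f lam) (PiE {..<f} (\<lambda>_. {..<p})) UNIV"
begin

lemma power_coords_eqI:
  "e \<in> PiE {..<f} (\<lambda>_. {..<p}) \<Longrightarrow> lincomb_powers f lam e = a \<Longrightarrow>
    power_coords p f lam a = e"
  unfolding power_coords_def using bij by (auto simp: bij_betw_def inv_into_f_eq)

lemma power_coords_in_PiE: "power_coords p f lam a \<in> PiE {..<f} (\<lambda>_. {..<p})"
  unfolding power_coords_def using bij by (auto simp: bij_betw_def inv_into_into)

lemma lincomb_powers_power_coords: "lincomb_powers f lam (power_coords p f lam a) = a"
  unfolding power_coords_def using bij by (auto simp: bij_betw_def f_inv_into_f)

lemma power_coords_add:
  assumes "CHAR('a) = p" and "0 < p"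
  shows "power_coords p f lam (a + b) =
    restrict (\<lambda>i. (power_coords p f lam a i + power_coords p f lam b i) mod p) {..<f}"
proof (rule power_coords_eqI)
  let ?e = "\<lambda>i. power_coords p f lam a i + power_coords p f lam b i"
  show "restrict (\<lambda>i. ?e i mod p) {..<f} \<in> PiE {..<f} (\<lambda>_. {..<p})"
    using assms(2) by simp
  have "lincomb_powers f lam (restrict (\<lambda>i. ?e i mod p) {..<f}) = lincomb_powers f lam ?e"
    by (subst (2) lincomb_powers_mod_CHAR) (rule lincomb_powers_cong, simp add: assms(1))
  then show "lincomb_powers f lam (restrict (\<lambda>i. ?e i mod p) {..<f}) = a + b"
    by (simp add: lincomb_powers_power_coords flip: lincomb_powers_add)
qed

lemma power_coords_one:
  assumes "0 < f" and "1 < p"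
  shows "power_coords p f lam 1 0 = 1"
proof -
  have "lincomb_powers f lam (restrict (\<lambda>i. if i = 0 then 1 else 0) {..<f}) = 1"
    using lincomb_powers_unit[OF assms(1), of lam]
    by (subst lincomb_powers_cong[where e' = "\<lambda>i. if i = 0 then 1 else 0"]) auto
  then have "power_coords p f lam 1 = restrict (\<lambda>i. if i = 0 then 1 else 0) {..<f}"
    using assms by (intro power_coords_eqI) auto
  with assms show ?thesis
    by simp
qed

lemma chi_Fq_eq_power_coords:
  assumes "0 < f"
  shows "chi_Fq p f lam z a = z ^ power_coords p f lam a 0"
proof -
  have "(c < p \<and> (\<exists>cs. (\<forall>i. cs i < p) \<and> a = of_nat c + (\<Sum>i=1..<f. of_nat (cs i) * lam ^ i)))
      \<longleftrightarrow> c = power_coords p f lam a 0" (is "?rep \<longleftrightarrow> _") for c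
  proof
    assume ?rep
    then obtain cs where "c < p" "\<forall>i. cs i < p" "a = of_nat c + (\<Sum>i=1..<f. of_nat (cs i) * lam ^ i)"
      by blast
    then have "power_coords p f lam a = restrict (cs(0 := c)) {..<f}"
      using assms by (intro power_coords_eqI) (auto simp: lincomb_powers_split_first)
    then show "c = power_coords p f lam a 0"
      using assms by simp
  next
    assume c: "c = power_coords p f lam a 0"
    define cs where "cs i = (if i < f then power_coords p f lam a i else 0)" for i
    have "\<forall>i. cs i < p" "c < p"
      using power_coords_in_PiE[of a] assms c by (auto simp: cs_def PiE_iff)
    moreover have "a = of_nat c + (\<Sum>i=1..<f. of_nat (cs i) * lam ^ i)"
      using lincomb_powers_power_coords[of a] lincomb_powers_split_first[OF assms, of lam]
        lincomb_powers_cong[of f cs "power_coords p f lam a" lam] c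
      by (simp add: cs_def)
    ultimately show ?rep
      by blast
  qed
  then show ?thesis
    unfolding chi_Fq_def by simp
qed

end

lemma Fq_character_generating:
  fixes chi :: "'a::{comm_ring_1,finite} \<Rightarrow> complex"
  assumes "Fq_character p f lam z chi"
  shows "generating_character chi"
proof -
  obtain P where field: "is_field_ring TYPE('a)" and p: "prime p" and p0: "of_nat p = (0::'a)"
    and f: "0 < f" and card: "card (UNIV :: 'a set) = p ^ f" and z: "prim_root_unity z p"
    and chi: "chi = chi_Fq p f lam z" and P: "over_prime_field P" "degree P = f" "poly P lam = 0"
    and order: "lam ^ (p ^ f - 1) = 1"
      "\<And>m. 0 < m \<Longrightarrow> m < p ^ f - 1 \<Longrightarrow> lam ^ m \<noteq> 1"
    using assms unfolding Fq_character_def primitive_irreducible_def by metis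
  have "p \<le> p ^ f"
    using power_increasing[of 1 f p] f prime_gt_0_nat[OF p] by simp
  then have "1 < card (UNIV :: 'a set)"
    using card prime_gt_1_nat[OF p] by linarith
  then have one: "(1::'a) \<noteq> 0"
    by (rule one_neq_zero_if_card_gt_1)
  have CHAR: "CHAR('a) = p"
    using p p0 one by (rule CHAR_eq_prime)
  have "range (lincomb_powers f lam) = UNIV"
    using field one CHAR p P f order card by (intro range_lincomb_powers_eq_UNIV) simp_all
  then have bij: "bij_betw (lincomb_powers f lam) (PiE {..<f} (\<lambda>_. {..<p})) UNIV"
    using CHAR card by (intro bij_betw_lincomb_powers)
  show ?thesis
    unfolding chi chi_Fq_eq_power_coords[OF bij f, abs_def]
  proof (rule generating_character_root_power[OF z])
    show "0 < p"
      using p by (rule prime_gt_0_nat)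
    show "power_coords p f lam (a + b) 0 = (power_coords p f lam a 0 + power_coords p f lam b 0) mod p"
      for a b
      using power_coords_add[OF bij CHAR prime_gt_0_nat[OF p], of a b] f by simp
    show "\<exists>t. power_coords p f lam (t * c) 0 mod p \<noteq> 0" if c: "c \<noteq> 0" for c
    proof -
      obtain t where "c * t = 1"
        using field c unfolding is_field_ring_def by blast
      then have "power_coords p f lam (t * c) 0 = 1"
        using power_coords_one[OF bij f prime_gt_1_nat[OF p]] by (simp only: mult.commute)
      then have "power_coords p f lam (t * c) 0 mod p \<noteq> 0"
        using prime_gt_1_nat[OF p] by simp
      then show ?thesis ..
    qed
  qed
qed

theorem mainTheorem6:
  fixes chi :: "'r::{comm_ring_1,finite} \<Rightarrow> complex"
    and n :: nat and C D :: "(nat \<Rightarrow> 'r) set" and w :: "nat \<Rightarrow> 'r"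
  assumes ring: "(\<exists>p f lam z. Fq_character p f lam z chi) \<or> (\<exists>k z. Zk_character k z chi)"
    and C: "linear_code n C" and D: "linear_code n D" and w: "w \<in> vecs n"
  shows "\<forall>x :: 'r \<times> 'r \<times> 'r \<Rightarrow> complex.
      Jac_av n C (dual_code n D) w x =
        (1 / of_nat (card D)) *
        Jac_av n C D w (\<lambda>(a1, a2, a3). \<Sum>b\<in>UNIV. chi (a2 * b) * x (a1, b, a3))
    \<and> Jac_av n (dual_code n C) D w x =
        (1 / of_nat (card C)) *
        Jac_av n C D w (\<lambda>(a1, a2, a3). \<Sum>b\<in>UNIV. chi (a1 * b) * x (b, a2, a3))
    \<and> Jac_av n (dual_code n C) (dual_code n D) w x =
        (1 / (of_nat (card C) * of_nat (card D))) *
        Jac_av n C D w (\<lambda>(a1, a2, a3). \<Sum>b1\<in>UNIV. \<Sum>b2\<in>UNIV.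
                          chi (a1 * b1 + a2 * b2) * x (b1, b2, a3))"
proof -
  have chi: "generating_character chi"
    using ring Fq_character_generating Zk_character_generating by blast
  have dual_dual:
    "(\<Sum>b1\<in>UNIV. chi (a1 * b1) * (\<Sum>b2\<in>UNIV. chi (a2 * b2) * x (b1, b2, a3))) =
      (\<Sum>b1\<in>UNIV. \<Sum>b2\<in>UNIV. chi (a1 * b1 + a2 * b2) * x (b1, b2, a3))"
    for a1 a2 a3 and x :: "'r \<times> 'r \<times> 'r \<Rightarrow> complex"
    by (simp add: sum_distrib_left mult.assoc generating_character_add[OF chi])
  show ?thesis
    by (simp add: Jac_av_dual_right[OF chi D] Jac_av_dual_left[OF chi C] dual_dual)
qed

end
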